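(* For $\epsilon>0$ and $\Delta\in\mathbb{R}$ let $\mathrm{LB}(\alpha,\epsilon,\Delta):=\alpha\Delta+\alpha\int_{\alpha}^{1}\frac{1-t}{t(1-t)+\epsilon}\,dt+(1-\alpha)\int_{0}^{\alpha}\frac{t}{t(1-t)+\epsilon}\,dt$ for $\alpha\in[0,1]$. Then $$\frac{\partial\,\mathrm{LB}(\alpha,\epsilon,\Delta)}{\partial\alpha}=\Delta+\frac{1}{\sqrt{1+4\epsilon}}\log\left|\frac{\alpha-\frac{1+\sqrt{1+4\epsilon}}{2}}{\alpha-\frac{1-\sqrt{1+4\epsilon}}{2}}\right|,\qquad \frac{\partial^{2}\,\mathrm{LB}(\alpha,\epsilon,\Delta)}{\partial\alpha^{2}}=-\frac{1}{\alpha(1-\alpha)+\epsilon},$$ and consequently $\alpha\mapsto\mathrm{LB}(\alpha,\epsilon,\Delta)$ is strictly concave on $[0,1]$. *)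

theory Defs
  imports "HOL-Analysis.Analysis"
begin

definition LB :: "real \<Rightarrow> real \<Rightarrow> real \<Rightarrow> real" where
  "LB \<alpha> \<epsilon> \<Delta> =
     \<alpha> * \<Delta>
     + \<alpha> * integral {\<alpha>..1} (\<lambda>t. (1 - t) / (t * (1 - t) + \<epsilon>))
     + (1 - \<alpha>) * integral {0..\<alpha>} (\<lambda>t. t / (t * (1 - t) + \<epsilon>))"

definition strictly_concave_on :: "real set \<Rightarrow> (real \<Rightarrow> real) \<Rightarrow> bool" where
  "strictly_concave_on S f \<longleftrightarrow> convex S \<and>
     (\<forall>x\<in>S. \<forall>y\<in>S. \<forall>u::real. x \<noteq> y \<and> 0 < u \<and> u < 1 \<longrightarrow>
        f (u * x + (1 - u) * y) > u * f x + (1 - u) * f y)"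

end

theory Submission
  imports Defs
begin

(* With r = (1 + sqrt (1 + 4 \<epsilon>)) / 2 and s = (1 - sqrt (1 + 4 \<epsilon>)) / 2 the quadratic factors as
   t (1 - t) + \<epsilon> = (r - t) (t - s), and s < 0 < 1 < r.  Partial fractions give logarithmic
   antiderivatives of both integrands on (s, r), so LB is explicit on [0, 1].  Differentiating,
   the boundary terms \<alpha> (1 - \<alpha>) / q(\<alpha>) of the two integrals cancel and what remains
   is \<Delta> plus the log ratio, whose derivative -1 / q(\<alpha>) is negative; a function with
   negative second derivative on an interval is strictly concave by two applications of the
   mean value theorem. *)

lemma mvt_within_Icc:
  fixes f f' :: "real \<Rightarrow> real"
  assumes der: "\<And>t. t \<in> {a..b} \<Longrightarrow> (f has_real_derivative f' t) (at t within {a..b})"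
    and "a \<le> x" "x < y" "y \<le> b"
  obtains \<xi> where "x < \<xi>" "\<xi> < y" "f y - f x = f' \<xi> * (y - x)"
proof -
  have "(f has_derivative (\<lambda>h. f' t * h)) (at t within {x..y})" if "x \<le> t" "t \<le> y" for t
    using der[of t] DERIV_subset[of f "f' t" t "{a..b}" "{x..y}"] that assms(2-4)
    by (simp add: has_field_derivative_def)
  then show ?thesis
    using mvt_simple[OF \<open>x < y\<close>, of f "\<lambda>t h. f' t * h"] that by auto
qed

lemma chord_below_if_derivative_decreasing:
  fixes f f' :: "real \<Rightarrow> real"
  assumes der: "\<And>t. t \<in> {a..b} \<Longrightarrow> (f has_real_derivative f' t) (at t within {a..b})"
    and decr: "\<And>s t. a \<le> s \<Longrightarrow> s < t \<Longrightarrow> t \<le> b \<Longrightarrow> f' t < f' s"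
    and xy: "a \<le> x" "x < y" "y \<le> b" and u: "0 < u" "u < 1"
  shows "u * f x + (1 - u) * f y < f (u * x + (1 - u) * y)"
proof -
  define z where "z = u * x + (1 - u) * y"
  have zx: "z - x = (1 - u) * (y - x)" and yz: "y - z = u * (y - x)"
    by (simp_all add: z_def algebra_simps)
  then have "x < z" "z < y"
    using xy u by (smt (verit) mult_pos_pos)+
  obtain \<xi> where \<xi>: "x < \<xi>" "\<xi> < z" "f z - f x = f' \<xi> * (z - x)"
    using mvt_within_Icc[OF der] xy \<open>x < z\<close> \<open>z < y\<close> by (metis order.strict_trans order.order_iff_strict)
  obtain \<eta> where \<eta>: "z < \<eta>" "\<eta> < y" "f y - f z = f' \<eta> * (y - z)"
    using mvt_within_Icc[OF der] xy \<open>x < z\<close> \<open>z < y\<close> by (metis order.strict_trans order.order_iff_strict)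
  have "f' \<eta> < f' \<xi>"
    using decr \<xi> \<eta> xy by simp
  have "f z - (u * f x + (1 - u) * f y) = u * (f z - f x) - (1 - u) * (f y - f z)"
    by (simp add: algebra_simps)
  also have "\<dots> = u * (1 - u) * (y - x) * (f' \<xi> - f' \<eta>)"
    unfolding \<xi>(3) \<eta>(3) zx yz by (simp add: algebra_simps)
  also have "\<dots> > 0"
    using u xy \<open>f' \<eta> < f' \<xi>\<close> by simp
  finally show ?thesis
    by (simp add: z_def)
qed

lemma strictly_concave_on_Icc_if_second_derivative_neg:
  fixes f f' f'' :: "real \<Rightarrow> real"
  assumes f': "\<And>t. t \<in> {a..b} \<Longrightarrow> (f has_real_derivative f' t) (at t within {a..b})"
    and f'': "\<And>t. t \<in> {a..b} \<Longrightarrow> (f' has_real_derivative f'' t) (at t within {a..b})"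
    and neg: "\<And>t. t \<in> {a..b} \<Longrightarrow> f'' t < 0"
  shows "strictly_concave_on {a..b} f"
  unfolding strictly_concave_on_def
proof (intro conjI ballI allI impI)
  have decr: "f' t < f' s" if st: "a \<le> s" "s < t" "t \<le> b" for s t
  proof -
    obtain \<xi> where "s < \<xi>" "\<xi> < t" "f' t - f' s = f'' \<xi> * (t - s)"
      using mvt_within_Icc[OF f'' st] .
    moreover have "f'' \<xi> < 0"
      using neg st calculation by simp
    ultimately show ?thesis
      using \<open>s < t\<close> mult_neg_pos[of "f'' \<xi>" "t - s"] by linarith
  qed
  fix x y u :: real assume "x \<in> {a..b}" "y \<in> {a..b}" and xyu: "x \<noteq> y \<and> 0 < u \<and> u < 1"
  then consider "a \<le> x" "x < y" "y \<le> b" | "a \<le> y" "y < x" "x \<le> b"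
    by fastforce
  then show "u * f x + (1 - u) * f y < f (u * x + (1 - u) * y)"
  proof cases
    case 1
    then show ?thesis
      using chord_below_if_derivative_decreasing[OF f' decr] xyu by blast
  next
    case 2
    then show ?thesis
      using chord_below_if_derivative_decreasing[OF f' decr, of y x "1 - u"] xyu
      by (simp add: algebra_simps)
  qed
qed simp

lemma DERIV_partial_fractions_t:
  fixes a b t :: real
  assumes "b < t" "t < a"
  shows "((\<lambda>x. (b * ln (x - b) - a * ln (a - x)) / (a - b))
           has_real_derivative t / ((a - t) * (t - b))) (at t)"
proof -
  have "((\<lambda>x. (b * ln (x - b) - a * ln (a - x)) / (a - b))
          has_real_derivative (b / (t - b) + a / (a - t)) / (a - b)) (at t)"
    using assms by (auto intro!: derivative_eq_intros)
  moreover have "(b / (t - b) + a / (a - t)) / (a - b) = t / ((a - t) * (t - b))"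
    using assms by (simp add: divide_simps) (simp add: algebra_simps)
  ultimately show ?thesis
    by simp
qed

lemma DERIV_partial_fractions_reflected:
  fixes a b t :: real
  assumes "b < t" "t < a"
  shows "((\<lambda>x. (a * ln (x - b) - b * ln (a - x)) / (a - b))
           has_real_derivative (a + b - t) / ((a - t) * (t - b))) (at t)"
proof -
  have "((\<lambda>x. (a * ln (x - b) - b * ln (a - x)) / (a - b))
          has_real_derivative (a / (t - b) + b / (a - t)) / (a - b)) (at t)"
    using assms by (auto intro!: derivative_eq_intros)
  moreover have "(a / (t - b) + b / (a - t)) / (a - b) = (a + b - t) / ((a - t) * (t - b))"
    using assms by (simp add: divide_simps) (simp add: algebra_simps)
  ultimately show ?thesis
    by simp
qed

lemma DERIV_ln_ratio:
  fixes a b t :: real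
  assumes "b < t" "t < a"
  shows "((\<lambda>x. (ln (a - x) - ln (x - b)) / (a - b))
           has_real_derivative - 1 / ((a - t) * (t - b))) (at t)"
proof -
  have "((\<lambda>x. (ln (a - x) - ln (x - b)) / (a - b))
          has_real_derivative (- 1 / (a - t) - 1 / (t - b)) / (a - b)) (at t)"
    using assms by (auto intro!: derivative_eq_intros)
  moreover have "(- 1 / (a - t) - 1 / (t - b)) / (a - b) = - 1 / ((a - t) * (t - b))"
    using assms by (simp add: divide_simps)
  ultimately show ?thesis
    by simp
qed

definition upper_root :: "real \<Rightarrow> real" where
  "upper_root \<epsilon> = (1 + sqrt (1 + 4 * \<epsilon>)) / 2"

definition lower_root :: "real \<Rightarrow> real" where
  "lower_root \<epsilon> = (1 - sqrt (1 + 4 * \<epsilon>)) / 2"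

definition log_root_ratio :: "real \<Rightarrow> real \<Rightarrow> real" where
  "log_root_ratio \<epsilon> a = (1 / sqrt (1 + 4 * \<epsilon>)) * ln \<bar>(a - upper_root \<epsilon>) / (a - lower_root \<epsilon>)\<bar>"

definition antideriv_t :: "real \<Rightarrow> real \<Rightarrow> real" where
  "antideriv_t \<epsilon> x =
     (lower_root \<epsilon> * ln (x - lower_root \<epsilon>) - upper_root \<epsilon> * ln (upper_root \<epsilon> - x))
       / (upper_root \<epsilon> - lower_root \<epsilon>)"

definition antideriv_one_minus_t :: "real \<Rightarrow> real \<Rightarrow> real" where
  "antideriv_one_minus_t \<epsilon> x =
     (upper_root \<epsilon> * ln (x - lower_root \<epsilon>) - lower_root \<epsilon> * ln (upper_root \<epsilon> - x))
       / (upper_root \<epsilon> - lower_root \<epsilon>)"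

lemma upper_root_plus_lower_root: "upper_root \<epsilon> + lower_root \<epsilon> = 1"
  by (simp add: upper_root_def lower_root_def field_simps)

lemma upper_root_minus_lower_root: "upper_root \<epsilon> - lower_root \<epsilon> = sqrt (1 + 4 * \<epsilon>)"
  by (simp add: upper_root_def lower_root_def field_simps)

context
  fixes \<epsilon> :: real
  assumes eps_pos: "0 < \<epsilon>"
begin

lemma roots_outside_unit_interval: "lower_root \<epsilon> < 0" "1 < upper_root \<epsilon>"
proof -
  have "1 < sqrt (1 + 4 * \<epsilon>)"
    using eps_pos by (simp add: real_less_rsqrt)
  then show "lower_root \<epsilon> < 0" "1 < upper_root \<epsilon>"
    by (simp_all add: upper_root_def lower_root_def)
qed

lemma between_roots_if_mem_unit_interval:
  assumes "t \<in> {0..1}"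
  shows "lower_root \<epsilon> < t" "t < upper_root \<epsilon>"
  using assms roots_outside_unit_interval by auto

lemma quadratic_eq_root_product:
  "t * (1 - t) + \<epsilon> = (upper_root \<epsilon> - t) * (t - lower_root \<epsilon>)"
proof -
  have "sqrt (1 + 4 * \<epsilon>) ^ 2 = 1 + 4 * \<epsilon>"
    using eps_pos by simp
  then show ?thesis
    by (simp add: upper_root_def lower_root_def field_simps power2_eq_square)
qed

lemma DERIV_antideriv_t:
  assumes "lower_root \<epsilon> < t" "t < upper_root \<epsilon>"
  shows "(antideriv_t \<epsilon> has_real_derivative t / (t * (1 - t) + \<epsilon>)) (at t)"
  unfolding antideriv_t_def[abs_def] quadratic_eq_root_product
  by (rule DERIV_partial_fractions_t[OF assms])

lemma DERIV_antideriv_one_minus_t: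
  assumes "lower_root \<epsilon> < t" "t < upper_root \<epsilon>"
  shows "(antideriv_one_minus_t \<epsilon> has_real_derivative (1 - t) / (t * (1 - t) + \<epsilon>)) (at t)"
  using DERIV_partial_fractions_reflected[OF assms]
  unfolding antideriv_one_minus_t_def[abs_def] quadratic_eq_root_product upper_root_plus_lower_root .

lemma integral_t_over_quadratic:
  assumes "0 \<le> \<alpha>" "\<alpha> \<le> 1"
  shows "integral {0..\<alpha>} (\<lambda>t. t / (t * (1 - t) + \<epsilon>)) = antideriv_t \<epsilon> \<alpha> - antideriv_t \<epsilon> 0"
proof (rule integral_unique, rule fundamental_theorem_of_calculus[OF assms(1)])
  fix t assume "t \<in> {0..\<alpha>}"
  then have "t \<in> {0..1}"
    using assms by simp
  then show "(antideriv_t \<epsilon> has_vector_derivative t / (t * (1 - t) + \<epsilon>)) (at t within {0..\<alpha>})"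
    using DERIV_antideriv_t between_roots_if_mem_unit_interval
    by (simp add: has_real_derivative_iff_has_vector_derivative[symmetric] has_field_derivative_at_within)
qed

lemma integral_one_minus_t_over_quadratic:
  assumes "0 \<le> \<alpha>" "\<alpha> \<le> 1"
  shows "integral {\<alpha>..1} (\<lambda>t. (1 - t) / (t * (1 - t) + \<epsilon>))
           = antideriv_one_minus_t \<epsilon> 1 - antideriv_one_minus_t \<epsilon> \<alpha>"
proof (rule integral_unique, rule fundamental_theorem_of_calculus[OF assms(2)])
  fix t assume "t \<in> {\<alpha>..1}"
  then have "t \<in> {0..1}"
    using assms by simp
  then show "(antideriv_one_minus_t \<epsilon> has_vector_derivative (1 - t) / (t * (1 - t) + \<epsilon>))
               (at t within {\<alpha>..1})"
    using DERIV_antideriv_one_minus_t between_roots_if_mem_unit_interval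
    by (simp add: has_real_derivative_iff_has_vector_derivative[symmetric] has_field_derivative_at_within)
qed

lemma LB_eq_antiderivs:
  assumes "\<alpha> \<in> {0..1}"
  shows "LB \<alpha> \<epsilon> \<Delta> = \<alpha> * \<Delta> + \<alpha> * (antideriv_one_minus_t \<epsilon> 1 - antideriv_one_minus_t \<epsilon> \<alpha>)
                       + (1 - \<alpha>) * (antideriv_t \<epsilon> \<alpha> - antideriv_t \<epsilon> 0)"
  using assms by (simp add: LB_def integral_t_over_quadratic integral_one_minus_t_over_quadratic)

lemma log_root_ratio_eq:
  assumes "lower_root \<epsilon> < a" "a < upper_root \<epsilon>"
  shows "log_root_ratio \<epsilon> a
           = (ln (upper_root \<epsilon> - a) - ln (a - lower_root \<epsilon>)) / (upper_root \<epsilon> - lower_root \<epsilon>)"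
proof -
  have "\<bar>(a - upper_root \<epsilon>) / (a - lower_root \<epsilon>)\<bar> = (upper_root \<epsilon> - a) / (a - lower_root \<epsilon>)"
    using assms by (simp add: abs_div)
  then show ?thesis
    using assms by (simp add: log_root_ratio_def upper_root_minus_lower_root ln_div)
qed

lemma antideriv_t_plus_antideriv_one_minus_t:
  assumes "lower_root \<epsilon> < a" "a < upper_root \<epsilon>"
  shows "antideriv_t \<epsilon> a + antideriv_one_minus_t \<epsilon> a = - log_root_ratio \<epsilon> a"
proof -
  have "antideriv_t \<epsilon> a + antideriv_one_minus_t \<epsilon> a
          = (upper_root \<epsilon> + lower_root \<epsilon>) * (ln (a - lower_root \<epsilon>) - ln (upper_root \<epsilon> - a))
              / (upper_root \<epsilon> - lower_root \<epsilon>)"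
    by (simp add: antideriv_t_def antideriv_one_minus_t_def add_divide_distrib[symmetric] algebra_simps)
  then show ?thesis
    using assms by (simp add: log_root_ratio_eq upper_root_plus_lower_root minus_divide_left)
qed

lemma antideriv_boundary_terms_cancel:
  "antideriv_one_minus_t \<epsilon> 1 + antideriv_t \<epsilon> 0 = 0"
proof -
  have roots: "1 - lower_root \<epsilon> = upper_root \<epsilon>" "upper_root \<epsilon> - 1 = - lower_root \<epsilon>"
    using upper_root_plus_lower_root[of \<epsilon>] by linarith+
  show ?thesis
    unfolding antideriv_t_def antideriv_one_minus_t_def roots
    by (simp add: add_divide_distrib[symmetric])
qed

lemma has_real_derivative_LB:
  assumes "\<alpha> \<in> {0..1}"
  shows "((\<lambda>a. LB a \<epsilon> \<Delta>) has_real_derivative \<Delta> + log_root_ratio \<epsilon> \<alpha>) (at \<alpha> within {0..1})"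
proof -
  let ?P = "antideriv_t \<epsilon>" and ?Q = "antideriv_one_minus_t \<epsilon>"
  let ?q = "\<alpha> * (1 - \<alpha>) + \<epsilon>"
  note between = between_roots_if_mem_unit_interval[OF assms]
  have "\<Delta> + (?Q 1 - ?Q \<alpha>) - \<alpha> * ((1 - \<alpha>) / ?q) - (?P \<alpha> - ?P 0) + (1 - \<alpha>) * (\<alpha> / ?q)
          = \<Delta> + (?Q 1 + ?P 0) - (?P \<alpha> + ?Q \<alpha>)"
    by (simp add: algebra_simps)
  also have "\<dots> = \<Delta> + log_root_ratio \<epsilon> \<alpha>"
    unfolding antideriv_boundary_terms_cancel antideriv_t_plus_antideriv_one_minus_t[OF between]
    by simp
  finally have slope: "\<Delta> + (?Q 1 - ?Q \<alpha>) - \<alpha> * ((1 - \<alpha>) / ?q) - (?P \<alpha> - ?P 0) + (1 - \<alpha>) * (\<alpha> / ?q)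
                         = \<Delta> + log_root_ratio \<epsilon> \<alpha>" .
  have "((\<lambda>a. a * \<Delta> + a * (?Q 1 - ?Q a) + (1 - a) * (?P a - ?P 0)) has_real_derivative
          \<Delta> + log_root_ratio \<epsilon> \<alpha>) (at \<alpha>)"
    unfolding slope[symmetric]
    by (auto intro!: derivative_eq_intros DERIV_antideriv_t[OF between] DERIV_antideriv_one_minus_t[OF between])
  then show ?thesis
    by (rule has_field_derivative_transform_within[OF has_field_derivative_at_within zero_less_one assms])
       (simp add: LB_eq_antiderivs)
qed

lemma DERIV_log_root_ratio:
  assumes "lower_root \<epsilon> < t" "t < upper_root \<epsilon>"
  shows "(log_root_ratio \<epsilon> has_real_derivative - 1 / (t * (1 - t) + \<epsilon>)) (at t)"
proof (rule has_field_derivative_transform_within_open)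
  show "((\<lambda>x. (ln (upper_root \<epsilon> - x) - ln (x - lower_root \<epsilon>)) / (upper_root \<epsilon> - lower_root \<epsilon>))
          has_real_derivative - 1 / (t * (1 - t) + \<epsilon>)) (at t)"
    unfolding quadratic_eq_root_product by (rule DERIV_ln_ratio[OF assms])
  show "t \<in> {lower_root \<epsilon><..<upper_root \<epsilon>}"
    using assms by simp
qed (simp_all add: log_root_ratio_eq)

end

theorem lemma4:
  fixes \<epsilon> \<Delta> :: real
  assumes "\<epsilon> > 0"
  shows "(\<forall>\<alpha>\<in>{0..1}.
            ((\<lambda>a. LB a \<epsilon> \<Delta>) has_real_derivative
               (\<Delta> + (1 / sqrt (1 + 4 * \<epsilon>)) *
                  ln \<bar>(\<alpha> - (1 + sqrt (1 + 4 * \<epsilon>)) / 2) / (\<alpha> - (1 - sqrt (1 + 4 * \<epsilon>)) / 2)\<bar>))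
              (at \<alpha> within {0..1}))
       \<and> (\<forall>\<alpha>\<in>{0..1}.
            ((\<lambda>a. \<Delta> + (1 / sqrt (1 + 4 * \<epsilon>)) *
                  ln \<bar>(a - (1 + sqrt (1 + 4 * \<epsilon>)) / 2) / (a - (1 - sqrt (1 + 4 * \<epsilon>)) / 2)\<bar>)
              has_real_derivative (- 1 / (\<alpha> * (1 - \<alpha>) + \<epsilon>))) (at \<alpha> within {0..1}))
       \<and> strictly_concave_on {0..1} (\<lambda>a. LB a \<epsilon> \<Delta>)"
proof -
  have LB': "((\<lambda>a. LB a \<epsilon> \<Delta>) has_real_derivative \<Delta> + log_root_ratio \<epsilon> \<alpha>) (at \<alpha> within {0..1})"
    if "\<alpha> \<in> {0..1}" for \<alpha>
    using has_real_derivative_LB[OF assms that] .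
  have LB'': "((\<lambda>a. \<Delta> + log_root_ratio \<epsilon> a) has_real_derivative - 1 / (\<alpha> * (1 - \<alpha>) + \<epsilon>))
                (at \<alpha> within {0..1})" if "\<alpha> \<in> {0..1}" for \<alpha>
    using DERIV_add[OF DERIV_const DERIV_log_root_ratio[OF assms between_roots_if_mem_unit_interval[OF assms that]]]
    by (simp add: has_field_derivative_at_within)
  have "- 1 / (\<alpha> * (1 - \<alpha>) + \<epsilon>) < 0" if "\<alpha> \<in> {0..1}" for \<alpha>
  proof -
    have "0 \<le> \<alpha> * (1 - \<alpha>)"
      using that by simp
    then show ?thesis
      using assms by simp
  qed
  then have "strictly_concave_on {0..1} (\<lambda>a. LB a \<epsilon> \<Delta>)"
    using strictly_concave_on_Icc_if_second_derivative_neg[OF LB' LB''] by blast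
  then show ?thesis
    using LB' LB'' unfolding log_root_ratio_def upper_root_def lower_root_def by blast
qed

end
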